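(* Let $\ell\in\mathbb{Z}_{\ge 2}$ and let $b_{n,m}=b_{n,m}(\ell)$ be as in the context. Define rational functions $R_{\ell-j}(x)$ for $2\le j\le \ell$ by $R_{\ell-2}(x)=1$, $R_{\ell-3}(x)=x^{-1}$, and $R_{\ell-j}(x)=x^{-1}R_{\ell-j+1}(x)-R_{\ell-j+2}(x)$ for $j>3$. Then for every $2\le j\le \ell$, as formal power series in $x$, $$\sum_{\substack{m\ge 0,\ m\equiv \ell-j \bmod \ell\\ n\ge \ell-j}} b_{n,m}x^n \;=\; R_{\ell-j}(x)\sum_{\substack{m\ge 0,\ m\equiv \ell-2\bmod \ell\\ n\ge \ell-2}} b_{n,m}x^n .$$
   Context: For $n,m\in\mathbb{Z}_{\ge 0}$, $a_{n,m}$ is the number of sequences of integers $(x_0,\dots,x_n)$ with $x_0=0$, $x_n=m$, all $x_i\ge 0$ and $|x_i-x_{i-1}|=1$ (unit step paths on $\mathbb{Z}_{\ge 0}$ from $0$ to $m$ of length $n$). For fixed $\ell\in\mathbb{Z}_{\ge2}$, the numbers $b_{n,m}=b_{n,m}(\ell)$ ($n,m\ge 0$) are defined by: $b_{n,m}=a_{n,m}$ if $m\equiv -1\pmod \ell$; $b_{n,m}=b_{n-1,m-1}+b_{n-1,m+1}$ if $m\equiv m_0\pmod\ell$ with $0\le m_0<\ell-2$; $b_{n,m}=b_{n-1,m-1}$ if $m\equiv -2\pmod \ell$. Here the recursion is used for $n\ge 1$, with initial values $b_{0,0}=1$, $b_{0,m}=0$ for $m>0$, and the convention $b_{n,-1}=0$.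 (In particular $b_{n,m}=0$ for $m>n$.) *)

theory Defs
  imports "HOL-Computational_Algebra.Formal_Laurent_Series"
begin

definition a :: "nat \<Rightarrow> nat \<Rightarrow> nat" where
  "a n m = card {xs :: nat list. length xs = Suc n \<and> xs ! 0 = 0 \<and> xs ! n = m \<and>
                 (\<forall>i<n. xs ! Suc i = xs ! i + 1 \<or> xs ! i = xs ! Suc i + 1)}"

text \<open>b l n m = b_{n,m}(l). The convention b_{n,-1} = 0 is built in (case m = 0).\<close>
fun b :: "nat \<Rightarrow> nat \<Rightarrow> nat \<Rightarrow> nat" where
  "b l 0 m = (if m = 0 then 1 else 0)"
| "b l (Suc n) m =
     (if m mod l = l - 1 then a (Suc n) m
      else if m mod l = l - 2 then (if m = 0 then 0 else b l n (m - 1))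
      else (if m = 0 then 0 else b l n (m - 1)) + b l n (m + 1))"

text \<open>Rseq k = R_{l-(k+2)}(x):  R_{l-2} = 1, R_{l-3} = x^{-1},
  R_{l-j} = x^{-1} R_{l-j+1} - R_{l-j+2}.\<close>
fun Rseq :: "nat \<Rightarrow> int fls" where
  "Rseq 0 = 1"
| "Rseq (Suc 0) = fls_X_inv"
| "Rseq (Suc (Suc k)) = fls_X_inv * Rseq (Suc k) - Rseq k"

text \<open>Generating series  sum_{m >= 0, m = r mod l, n >= r} b_{n,m} x^n.
  Since b_{n,m} = 0 for m > n, the coefficient of x^n is a finite sum over m <= n.\<close>
definition G :: "nat \<Rightarrow> nat \<Rightarrow> int fps" where
  "G l r = Abs_fps (\<lambda>n. if r \<le> n then int (\<Sum>m | m \<le> n \<and> m mod l = r mod l. b l n m) else 0)"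

end

theory Submission
  imports Defs
begin

text \<open>Write G_r for the generating series of the residue class r. Since b_{n,m} = 0 for
  m > n, the coefficient of x^n in G_r is the sum of b_{n,m} over the m <= n in the class, and
  the recursion defining b becomes G_r = x (G_{r-1} + G_{r+1}) for 1 <= r <= l - 3 and
  G_{l-2} = x G_{l-3}. Read downwards, G_{r-1} = x^{-1} G_r - G_{r+1}, this is the recurrence
  defining the R's, started at G_{l-2}. The class -1, where b is given by path counts, never
  enters.\<close>

lemma a_eq_0_if_less:
  assumes "n < m"
  shows "a n m = 0"
proof -
  have False
    if xs: "xs ! 0 = 0" "xs ! n = m"
      "\<forall>i<n. xs ! Suc i = xs ! i + 1 \<or> xs ! i = xs ! Suc i + 1"
    for xs :: "nat list"
  proof -
    have "xs ! i \<le> i" if "i \<le> n" for i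
      using that
    proof (induction i)
      case (Suc i)
      with xs(3)[rule_format, of i] show ?case by auto
    qed (use xs in simp)
    with xs(2) assms show False by fastforce
  qed
  then show ?thesis
    unfolding a_def card_eq_0_iff by blast
qed

lemma b_eq_0_if_less: "n < m \<Longrightarrow> b l n m = 0"
proof (induction n arbitrary: m)
  case (Suc n)
  then show ?case using a_eq_0_if_less by auto
qed simp

lemma G_nth:
  assumes "r < l" and "n \<le> N"
  shows "G l r $ n = (\<Sum>m | m \<le> N \<and> m mod l = r. int (b l n m))"
proof -
  have "G l r $ n = (\<Sum>m | m \<le> n \<and> m mod l = r. int (b l n m))"
  proof (cases "r \<le> n")
    case True
    with assms(1) show ?thesis by (simp add: G_def)
  next
    case False
    have "m mod l \<noteq> r" if "m \<le> n" for m
      using that False mod_less_eq_dividend[of m l] by linarith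
    then have empty: "{m. m \<le> n \<and> m mod l = r} = {}"
      by blast
    from False show ?thesis
      unfolding empty by (simp add: G_def)
  qed
  also have "\<dots> = (\<Sum>m | m \<le> N \<and> m mod l = r. int (b l n m))"
    using assms(2) by (intro sum.mono_neutral_left ballI) (auto intro!: b_eq_0_if_less)
  finally show ?thesis .
qed

lemma Suc_mod_eq_iff:
  assumes "0 < c" and "c < l"
  shows "Suc m mod l = c \<longleftrightarrow> m mod l = c - 1"
  using assms mod_Suc[of m l] mod_less_divisor[of l m] by auto

lemma residue_class_atMost_Suc:
  assumes "0 < c" and "c < l"
  shows "{m. m \<le> Suc N \<and> m mod l = c} = Suc ` {m. m \<le> N \<and> m mod l = c - 1}"
proof -
  have "m \<in> Suc ` {m. m \<le> N \<and> m mod l = c - 1}" if m: "m \<le> Suc N" "m mod l = c" for m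
  proof -
    obtain m' where "m = Suc m'"
      using m assms by (cases m) auto
    with m assms show ?thesis by (auto simp: Suc_mod_eq_iff)
  qed
  with assms show ?thesis by (auto simp: Suc_mod_eq_iff)
qed

lemma sum_residue_class_atMost_Suc:
  assumes "0 < c" and "c < l"
  shows "(\<Sum>m | m \<le> Suc N \<and> m mod l = c. f m) = (\<Sum>m | m \<le> N \<and> m mod l = c - 1. f (Suc m))"
  unfolding residue_class_atMost_Suc[OF assms] by (simp add: sum.reindex)

lemma G_recurrence_top:
  assumes "3 \<le> l"
  shows "G l (l - 2) = fps_X * G l (l - 3)"
proof (rule fps_ext)
  fix n
  show "G l (l - 2) $ n = (fps_X * G l (l - 3)) $ n"
  proof (cases n)
    case 0
    with assms show ?thesis by (auto simp: G_nth[where N = 0])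
  next
    case (Suc k)
    have "G l (l - 2) $ Suc k = (\<Sum>m | m \<le> Suc k \<and> m mod l = l - 2. int (b l k (m - 1)))"
      using assms by (subst G_nth[where N = "Suc k"]) (auto intro!: sum.cong)
    also have "\<dots> = (\<Sum>m | m \<le> k \<and> m mod l = l - 3. int (b l k m))"
      using assms by (subst sum_residue_class_atMost_Suc) (simp_all add: numeral_eq_Suc)
    also have "\<dots> = G l (l - 3) $ k"
      using assms by (intro G_nth[symmetric]) auto
    finally show ?thesis
      using Suc by simp
  qed
qed

lemma G_recurrence_inner:
  assumes "1 \<le> s" and "s + 3 \<le> l"
  shows "G l s = fps_X * (G l (s - 1) + G l (s + 1))"
proof (rule fps_ext)
  fix n
  show "G l s $ n = (fps_X * (G l (s - 1) + G l (s + 1))) $ n"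
  proof (cases n)
    case 0
    with assms show ?thesis by (auto simp: G_nth[where N = 0])
  next
    case (Suc k)
    have "G l s $ Suc k
        = (\<Sum>m | m \<le> Suc k \<and> m mod l = s. int (b l k (m - 1)))
        + (\<Sum>m | m \<le> Suc k \<and> m mod l = s. int (b l k (Suc m)))"
      using assms by (subst G_nth[where N = "Suc k"]) (auto simp: sum.distrib[symmetric] intro!: sum.cong)
    also have "(\<Sum>m | m \<le> Suc k \<and> m mod l = s. int (b l k (m - 1))) = G l (s - 1) $ k"
      using assms by (subst sum_residue_class_atMost_Suc) (auto intro!: G_nth[symmetric])
    also have "(\<Sum>m | m \<le> Suc k \<and> m mod l = s. int (b l k (Suc m)))
        = (\<Sum>m | m \<le> Suc (Suc k) \<and> m mod l = s + 1. int (b l k m))"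
      using assms by (subst sum_residue_class_atMost_Suc[where c = "s + 1" and N = "Suc k"]) simp_all
    also have "\<dots> = G l (s + 1) $ k"
      using assms by (intro G_nth[symmetric]) auto
    finally show ?thesis
      using Suc by simp
  qed
qed

lemma fls_X_inv_times_fps_X_times:
  "fls_X_inv * fps_to_fls (fps_X * f) = fps_to_fls (f :: 'a::comm_ring_1 fps)"
  by (simp add: fls_times_fps_to_fls mult.assoc[symmetric] fls_X_inv_times_conv_shift)

lemma G_eq_Rseq_times_G:
  "k + 2 \<le> l \<Longrightarrow> fps_to_fls (G l (l - 2 - k)) = Rseq k * fps_to_fls (G l (l - 2))"
proof (induction k rule: Rseq.induct)
  case 1
  then show ?case by simp
next
  case 2
  then have "fps_to_fls (G l (l - 3)) = fls_X_inv * fps_to_fls (G l (l - 2))"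
    by (simp add: G_recurrence_top fls_X_inv_times_fps_X_times)
  then show ?case by (simp add: numeral_eq_Suc)
next
  case (3 k)
  define s where "s = l - 3 - k"
  have s: "1 \<le> s" "s + 3 \<le> l" "l - 2 - Suc (Suc k) = s - 1" "l - 2 - Suc k = s" "l - 2 - k = s + 1"
    using "3.prems" unfolding s_def by auto
  have "fps_to_fls (G l (s - 1)) + fps_to_fls (G l (s + 1)) = fls_X_inv * fps_to_fls (G l s)"
    using G_recurrence_inner[OF s(1,2)] by (simp add: fls_X_inv_times_fps_X_times)
  then have "fps_to_fls (G l (s - 1)) = fls_X_inv * fps_to_fls (G l s) - fps_to_fls (G l (s + 1))"
    by (simp add: algebra_simps)
  with "3.IH" "3.prems" s show ?case by (simp add: algebra_simps)
qed

theorem lemma2p8: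
  fixes l j :: nat
  assumes "2 \<le> l" and "2 \<le> j" and "j \<le> l"
  shows "fps_to_fls (G l (l - j)) = Rseq (j - 2) * fps_to_fls (G l (l - 2))"
proof -
  have "l - j = l - 2 - (j - 2)"
    using assms by simp
  with assms show ?thesis
    using G_eq_Rseq_times_G[of "j - 2" l] by simp
qed

end
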